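(* Let $(F,\phi)$ be an extended representation graph for $E$, let $w\in F^0$, and let $p,q$ be paths of length $\ge1$ in $F$ with source $w$. If $r(p)=r(q)$, then $p=q$, or $cp=q$, or $p=cq$ for some closed path $c$ in $F$.
   Context: $E$ is a row-finite directed graph with, for each vertex $v$ emitting an edge, a chosen special edge $e^v\in s^{-1}(v)$; other edges are nonspecial. The double graph $E_d$ has vertices $E^0$ and edges $e$ (real) and $e^*$ (ghost) for $e\in E^1$, with $s_d(e)=s(e),r_d(e)=r(e),s_d(e^* )=r(e),r_d(e^* )=s(e)$. A closed path is a path of length $\ge1$ with equal source and range; juxtaposition denotes concatenation. An extended representation graph for $E$ is a pair $(F,\phi)$, $F$ a directed graph, $\phi:F\to E_d$ a graph homomorphism, such that for every $w\in F^0$: (i) $w$ is a source or receives exactly one edge $f_w$; (ii) if $w$ is a source or $\phi(f_w)$ is a nonspecial real edge, $\phi$ maps $s^{-1}(w)$ bijectively onto $s_d^{-1}(\phi(w))$; (iii) if $\phi(f_w)$ is a special real edge, onto $s_d^{-1}(\phi(w))\setminus\{\phi(f_w)^*\}$; (iv) if $\phi(f_w)$ is a ghost edge, onto the ghost edges in $s_d^{-1}(\phi(w))$. *)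

theory Defs
  imports Main
begin

definition digraph :: "'v set \<Rightarrow> 'e set \<Rightarrow> ('e \<Rightarrow> 'v) \<Rightarrow> ('e \<Rightarrow> 'v) \<Rightarrow> bool" where
  "digraph V Ed s r \<longleftrightarrow> (\<forall>e\<in>Ed. s e \<in> V \<and> r e \<in> V)"

definition row_finite :: "'v set \<Rightarrow> 'e set \<Rightarrow> ('e \<Rightarrow> 'v) \<Rightarrow> bool" where
  "row_finite V Ed s \<longleftrightarrow> (\<forall>v\<in>V. finite {e\<in>Ed. s e = v})"

definition special_choice :: "'v set \<Rightarrow> 'e set \<Rightarrow> ('e \<Rightarrow> 'v) \<Rightarrow> ('v \<Rightarrow> 'e) \<Rightarrow> bool" where
  "special_choice V Ed s sp \<longleftrightarrow>
     (\<forall>v\<in>V. {e\<in>Ed. s e = v} \<noteq> {} \<longrightarrow> sp v \<in> Ed \<and> s (sp v) = v)"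

definition is_special :: "('e \<Rightarrow> 'v) \<Rightarrow> ('v \<Rightarrow> 'e) \<Rightarrow> 'e \<Rightarrow> bool" where
  "is_special s sp e \<longleftrightarrow> e = sp (s e)"

text \<open>Edges of the double graph E_d: real edges e and ghost edges e*.\<close>
datatype 'e dedge = Real 'e | Ghost 'e

fun is_ghost :: "'e dedge \<Rightarrow> bool" where
  "is_ghost (Real e) = False" | "is_ghost (Ghost e) = True"

definition dedges :: "'e set \<Rightarrow> 'e dedge set" where
  "dedges Ed = Real ` Ed \<union> Ghost ` Ed"

fun ds :: "('e \<Rightarrow> 'v) \<Rightarrow> ('e \<Rightarrow> 'v) \<Rightarrow> 'e dedge \<Rightarrow> 'v" where
  "ds s r (Real e) = s e" | "ds s r (Ghost e) = r e"

fun dr :: "('e \<Rightarrow> 'v) \<Rightarrow> ('e \<Rightarrow> 'v) \<Rightarrow> 'e dedge \<Rightarrow> 'v" where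
  "dr s r (Real e) = r e" | "dr s r (Ghost e) = s e"

definition dout :: "'e set \<Rightarrow> ('e \<Rightarrow> 'v) \<Rightarrow> ('e \<Rightarrow> 'v) \<Rightarrow> 'v \<Rightarrow> 'e dedge set" where
  "dout Ed s r v = {x \<in> dedges Ed. ds s r x = v}"

text \<open>Extended representation graph (F, phi) for E (with special-edge choice sp).
  phi is given by a vertex map phi0 and an edge map phi1.\<close>
definition ext_rep_graph ::
  "'v set \<Rightarrow> 'e set \<Rightarrow> ('e \<Rightarrow> 'v) \<Rightarrow> ('e \<Rightarrow> 'v) \<Rightarrow> ('v \<Rightarrow> 'e) \<Rightarrow>
   'w set \<Rightarrow> 'f set \<Rightarrow> ('f \<Rightarrow> 'w) \<Rightarrow> ('f \<Rightarrow> 'w) \<Rightarrow> ('w \<Rightarrow> 'v) \<Rightarrow> ('f \<Rightarrow> 'e dedge) \<Rightarrow> bool" where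
  "ext_rep_graph V Ed s r sp W Fd sF rF phi0 phi1 \<longleftrightarrow>
     digraph W Fd sF rF \<and>
     (\<forall>w\<in>W. phi0 w \<in> V) \<and>
     (\<forall>f\<in>Fd. phi1 f \<in> dedges Ed \<and> ds s r (phi1 f) = phi0 (sF f) \<and> dr s r (phi1 f) = phi0 (rF f)) \<and>
     (\<forall>w\<in>W.
        ({f\<in>Fd. rF f = w} = {} \<or> (\<exists>f. {f\<in>Fd. rF f = w} = {f})) \<and>
        ({f\<in>Fd. rF f = w} = {} \<longrightarrow>
           bij_betw phi1 {f\<in>Fd. sF f = w} (dout Ed s r (phi0 w))) \<and>
        (\<forall>f\<in>Fd. rF f = w \<longrightarrow>
           (\<forall>e. phi1 f = Real e \<and> \<not> is_special s sp e \<longrightarrow>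
                bij_betw phi1 {g\<in>Fd. sF g = w} (dout Ed s r (phi0 w))) \<and>
           (\<forall>e. phi1 f = Real e \<and> is_special s sp e \<longrightarrow>
                bij_betw phi1 {g\<in>Fd. sF g = w} (dout Ed s r (phi0 w) - {Ghost e})) \<and>
           (\<forall>e. phi1 f = Ghost e \<longrightarrow>
                bij_betw phi1 {g\<in>Fd. sF g = w} {x \<in> dout Ed s r (phi0 w). is_ghost x})))"

text \<open>Paths of length at least 1 as nonempty edge lists e1 e2 ... en with r(e_i) = s(e_(i+1));
  juxtaposition is list append.\<close>
definition is_path :: "'f set \<Rightarrow> ('f \<Rightarrow> 'w) \<Rightarrow> ('f \<Rightarrow> 'w) \<Rightarrow> 'f list \<Rightarrow> bool" where
  "is_path Fd sF rF p \<longleftrightarrow> p \<noteq> [] \<and> set p \<subseteq> Fd \<and>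
     (\<forall>i. Suc i < length p \<longrightarrow> rF (p ! i) = sF (p ! Suc i))"

definition path_src :: "('f \<Rightarrow> 'w) \<Rightarrow> 'f list \<Rightarrow> 'w" where
  "path_src sF p = sF (hd p)"

definition path_rng :: "('f \<Rightarrow> 'w) \<Rightarrow> 'f list \<Rightarrow> 'w" where
  "path_rng rF p = rF (last p)"

definition is_closed_path :: "'f set \<Rightarrow> ('f \<Rightarrow> 'w) \<Rightarrow> ('f \<Rightarrow> 'w) \<Rightarrow> 'f list \<Rightarrow> bool" where
  "is_closed_path Fd sF rF c \<longleftrightarrow> is_path Fd sF rF c \<and> path_src sF c = path_rng rF c"

end

theory Submission
  imports Defs "HOL-Library.Sublist"
begin

text \<open>Of the axioms of an extended representation graph only condition (i) matters: every vertex
  of F receives at most one edge. Walking two paths with a common range backwards, their edges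
  are therefore forced to agree step by step, so one path is a suffix of the other; if they also
  have a common source, the remaining prefix returns to that source and is a closed path.\<close>

lemma ext_rep_graph_inj_on_range:
  assumes "ext_rep_graph V Ed s r sp W Fd sF rF phi0 phi1"
  shows "inj_on rF Fd"
proof (rule inj_onI)
  fix f g assume f: "f \<in> Fd" and g: "g \<in> Fd" and same_range: "rF f = rF g"
  have "rF f \<in> W"
    using assms f unfolding ext_rep_graph_def digraph_def by blast
  then have "{h\<in>Fd. rF h = rF f} = {} \<or> (\<exists>h. {h\<in>Fd. rF h = rF f} = {h})"
    using assms unfolding ext_rep_graph_def by blast
  moreover have "f \<in> {h\<in>Fd. rF h = rF f}" "g \<in> {h\<in>Fd. rF h = rF f}"
    using f g same_range by auto
  ultimately show "f = g" by (metis empty_iff singletonD)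
qed

lemma is_path_appendD:
  assumes "is_path Fd sF rF (a @ b)" "a \<noteq> []" "b \<noteq> []"
  shows "is_path Fd sF rF a" "is_path Fd sF rF b" "rF (last a) = sF (hd b)"
proof -
  have link: "rF ((a @ b) ! i) = sF ((a @ b) ! Suc i)" if "Suc i < length (a @ b)" for i
    using assms(1) that unfolding is_path_def by blast
  have edges: "set (a @ b) \<subseteq> Fd"
    using assms(1) unfolding is_path_def by blast
  show "is_path Fd sF rF a"
    unfolding is_path_def
  proof (intro conjI allI impI)
    fix i assume "Suc i < length a"
    with link[of i] show "rF (a ! i) = sF (a ! Suc i)" by (simp add: nth_append)
  qed (use assms(2) edges in auto)
  show "is_path Fd sF rF b"
    unfolding is_path_def
  proof (intro conjI allI impI)
    fix i assume "Suc i < length b"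
    with link[of "length a + i"] show "rF (b ! i) = sF (b ! Suc i)" by (simp add: nth_append)
  qed (use assms(3) edges in auto)
  show "rF (last a) = sF (hd b)"
    using link[of "length a - 1"] assms(2,3) by (simp add: nth_append last_conv_nth hd_conv_nth)
qed

lemma paths_same_range_suffix:
  assumes "inj_on rF Fd"
  shows "is_path Fd sF rF p \<Longrightarrow> is_path Fd sF rF q \<Longrightarrow> path_rng rF p = path_rng rF q \<Longrightarrow>
    suffix p q \<or> suffix q p"
proof (induction p arbitrary: q rule: rev_induct)
  case Nil
  then show ?case by (simp add: is_path_def)
next
  case (snoc x xs)
  have "q \<noteq> []" using snoc.prems by (simp add: is_path_def)
  then obtain ys y where q: "q = ys @ [y]" by (metis rev_exhaust)
  have "x \<in> Fd" "y \<in> Fd" using snoc.prems q by (auto simp: is_path_def)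
  with assms have "x = y" using snoc.prems(3) q by (simp add: path_rng_def inj_on_eq_iff)
  show ?case
  proof (cases "xs = [] \<or> ys = []")
    case True
    then show ?thesis using q \<open>x = y\<close> by (auto simp: suffix_def)
  next
    case False
    then have "is_path Fd sF rF xs" "is_path Fd sF rF ys"
      and "path_rng rF xs = path_rng rF ys"
      using is_path_appendD[of Fd sF rF xs "[x]"] is_path_appendD[of Fd sF rF ys "[y]"]
        snoc.prems q \<open>x = y\<close> by (auto simp: path_rng_def)
    then have "suffix xs ys \<or> suffix ys xs" using snoc.IH by blast
    then show ?thesis using q \<open>x = y\<close> by simp
  qed
qed

lemma suffix_path_same_source:
  assumes "is_path Fd sF rF q" "is_path Fd sF rF p" "suffix p q"
    and "path_src sF q = path_src sF p"
  shows "q = p \<or> (\<exists>c. is_closed_path Fd sF rF c \<and> q = c @ p)"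
proof -
  obtain c where q: "q = c @ p" using assms(3) by (auto simp: suffix_def)
  show ?thesis
  proof (cases "c = []")
    case True
    then show ?thesis using q by simp
  next
    case False
    have "p \<noteq> []" using assms(2) by (simp add: is_path_def)
    then have "is_path Fd sF rF c" "rF (last c) = sF (hd p)"
      using is_path_appendD[of Fd sF rF c p] assms(1) q False by auto
    then have "is_closed_path Fd sF rF c"
      using assms(4) q False by (simp add: is_closed_path_def path_src_def path_rng_def)
    then show ?thesis using q by blast
  qed
qed

theorem lemma5p15:
  fixes V :: "'v set" and Ed :: "'e set" and s r :: "'e \<Rightarrow> 'v" and sp :: "'v \<Rightarrow> 'e"
    and W :: "'w set" and Fd :: "'f set" and sF rF :: "'f \<Rightarrow> 'w"
    and phi0 :: "'w \<Rightarrow> 'v" and phi1 :: "'f \<Rightarrow> 'e dedge"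
    and w :: 'w and p q :: "'f list"
  assumes "digraph V Ed s r"
    and "row_finite V Ed s"
    and "special_choice V Ed s sp"
    and "ext_rep_graph V Ed s r sp W Fd sF rF phi0 phi1"
    and "w \<in> W"
    and "is_path Fd sF rF p" and "path_src sF p = w"
    and "is_path Fd sF rF q" and "path_src sF q = w"
    and "path_rng rF p = path_rng rF q"
  shows "p = q \<or> (\<exists>c. is_closed_path Fd sF rF c \<and> (c @ p = q \<or> p = c @ q))"
proof -
  have "inj_on rF Fd"
    using assms(4) by (rule ext_rep_graph_inj_on_range)
  then have "suffix p q \<or> suffix q p"
    using paths_same_range_suffix assms(6,8,10) by blast
  then show ?thesis
  proof
    assume "suffix p q"
    then show ?thesis using suffix_path_same_source[of Fd sF rF q p] assms(6-9) by auto
  next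
    assume "suffix q p"
    then show ?thesis using suffix_path_same_source[of Fd sF rF p q] assms(6-9) by auto
  qed
qed

end
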